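(* Let $\mu$ be a positive finite Borel measure on $[0,1)$. The following are equivalent: (i) the operators $H_\mu:A(\mathbb{T})\to A(\mathbb{T})$ and $C_\mu:A(\mathbb{T})\to A(\mathbb{T})$ are well defined; (ii) the operators $H_\mu:A(\mathbb{T})\to A(\mathbb{T})$ and $C_\mu:A(\mathbb{T})\to A(\mathbb{T})$ are nuclear; (iii) $\sum_{n=0}^\infty\mu_n<\infty$.
   Context: $A(\mathbb{T})$ is the Wiener algebra, identified with $\ell^1_A=\{f(z)=\sum_{n\ge0}a_nz^n: \|f\|_1=\sum_n|a_n|<\infty\}$, i.e. with the sequence space $\ell^1$ of Taylor coefficients. $\mu_n=\int_0^1t^n\,d\mu(t)$. On coefficient sequences, $H_\mu((a_n)_{n\ge0})=\left(\sum_{n=0}^\infty\mu_{n+k}a_n\right)_{k\ge0}$ and $C_\mu((a_n)_{n\ge0})=\left(\mu_k\sum_{n=0}^k a_n\right)_{k\ge0}$ (Cesàro-type operator). An operator $T:X\to Y$ between Banach spaces is nuclear if there exist $(x_n^* )\subseteq X^*$, $(y_n)\subseteq Y$ with $\sum_n\|x_n^*\|\|y_n\|<\infty$ and $T=\sum_n x_n^*(\cdot)y_n$. *)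

theory Defs
  imports "HOL-Analysis.Analysis" "HOL-Probability.Probability"
begin

text \<open>Wiener algebra A(T), identified with the space l^1 of Taylor coefficient sequences.\<close>
definition l1 :: "(nat \<Rightarrow> complex) set" where
  "l1 = {a. summable (\<lambda>n. norm (a n))}"

definition l1norm :: "(nat \<Rightarrow> complex) \<Rightarrow> real" where
  "l1norm a = (\<Sum>n. norm (a n))"

definition mom :: "real measure \<Rightarrow> nat \<Rightarrow> real" where
  "mom M n = (\<integral>t. t ^ n \<partial>M)"

definition Hmu :: "real measure \<Rightarrow> (nat \<Rightarrow> complex) \<Rightarrow> (nat \<Rightarrow> complex)" where
  "Hmu M a = (\<lambda>k. \<Sum>n. complex_of_real (mom M (n + k)) * a n)"

definition Cmu :: "real measure \<Rightarrow> (nat \<Rightarrow> complex) \<Rightarrow> (nat \<Rightarrow> complex)" where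
  "Cmu M a = (\<lambda>k. complex_of_real (mom M k) * (\<Sum>n\<le>k. a n))"

definition H_well_defined :: "real measure \<Rightarrow> bool" where
  "H_well_defined M \<longleftrightarrow> (\<forall>a\<in>l1. (\<forall>k. summable (\<lambda>n. complex_of_real (mom M (n + k)) * a n))
                                    \<and> Hmu M a \<in> l1)"

definition C_well_defined :: "real measure \<Rightarrow> bool" where
  "C_well_defined M \<longleftrightarrow> (\<forall>a\<in>l1. Cmu M a \<in> l1)"

definition l1_functional :: "((nat \<Rightarrow> complex) \<Rightarrow> complex) \<Rightarrow> bool" where
  "l1_functional f \<longleftrightarrow>
     (\<forall>a\<in>l1. \<forall>b\<in>l1. f (\<lambda>n. a n + b n) = f a + f b) \<and>
     (\<forall>a\<in>l1. \<forall>c. f (\<lambda>n. c * a n) = c * f a) \<and>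
     (\<exists>C. \<forall>a\<in>l1. norm (f a) \<le> C * l1norm a)"

definition dual_norm :: "((nat \<Rightarrow> complex) \<Rightarrow> complex) \<Rightarrow> real" where
  "dual_norm f = Sup {norm (f a) | a. a \<in> l1 \<and> l1norm a \<le> 1}"

definition nuclear_l1 :: "((nat \<Rightarrow> complex) \<Rightarrow> (nat \<Rightarrow> complex)) \<Rightarrow> bool" where
  "nuclear_l1 T \<longleftrightarrow>
     (\<forall>a\<in>l1. T a \<in> l1) \<and>
     (\<exists>xs ys. (\<forall>n. l1_functional (xs n)) \<and> (\<forall>n. ys n \<in> l1) \<and>
        summable (\<lambda>n. dual_norm (xs n) * l1norm (ys n)) \<and>
        (\<forall>a\<in>l1. (\<lambda>N. l1norm (\<lambda>k. T a k - (\<Sum>n<N. xs n a * ys n k))) \<longlonglongrightarrow> 0))"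

end

theory Submission
  imports Defs
begin

text \<open>If \<open>\<Sum> \<mu>\<^sub>n < \<infinity>\<close>, both operators satisfy \<open>|(T a)\<^sub>k| \<le> \<mu>\<^sub>k \<parallel>a\<parallel>\<^sub>1\<close>
  (for \<open>H\<^sub>\<mu>\<close> because the moments of a measure on \<open>[0,1)\<close> are nonnegative and decreasing).
  Any coordinatewise linear operator with such a bound by a summable weight is nuclear: it is the
  sum of the rank-one operators \<open>a \<mapsto> (T a)\<^sub>k e\<^sub>k\<close>, whose functionals have norm at most the weight.
  Conversely \<open>C\<^sub>\<mu> e\<^sub>0 = (\<mu>\<^sub>k)\<^sub>k\<close>, so already the well-definedness of \<open>C\<^sub>\<mu>\<close> forces \<open>\<Sum> \<mu>\<^sub>n < \<infinity>\<close>.\<close>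

lemma zero_in_l1: "(\<lambda>n. 0::complex) \<in> l1"
  by (simp add: l1_def)

lemma l1norm_zero: "l1norm (\<lambda>n. 0::complex) = 0"
  by (simp add: l1norm_def)

lemma unit_vector_in_l1: "(\<lambda>n. if n = k then 1 else 0 :: complex) \<in> l1"
proof -
  have "(\<lambda>n. norm (if n = k then 1 else 0 :: complex)) = (\<lambda>n. if n = k then 1 else 0)"
    by auto
  then show ?thesis
    unfolding l1_def by simp
qed

lemma l1norm_unit_vector: "l1norm (\<lambda>n. if n = k then 1 else 0 :: complex) = 1"
proof -
  have "(\<lambda>n. norm (if n = k then 1 else 0 :: complex)) = (\<lambda>n. if n = k then 1 else 0)"
    by auto
  then show ?thesis
    unfolding l1norm_def using sums_single[of k "\<lambda>_. 1::real"] by (simp add: sums_iff)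
qed

lemma l1norm_truncation_tendsto_zero:
  assumes "b \<in> l1"
  shows "(\<lambda>N. l1norm (\<lambda>k. if k < N then 0 else b k)) \<longlonglongrightarrow> 0"
proof -
  define g where "g = (\<lambda>k. norm (b k))"
  have g: "summable g"
    using assms by (simp add: l1_def g_def)
  have "l1norm (\<lambda>k. if k < N then 0 else b k) = suminf g - (\<Sum>k<N. g k)" for N
  proof -
    have "(\<lambda>k. g k - (if k \<in> {..<N} then g k else 0)) sums (suminf g - (\<Sum>k<N. g k))"
      by (intro sums_diff summable_sums g sums_If_finite_set) auto
    moreover have "(\<lambda>k. norm (if k < N then 0 else b k))
        = (\<lambda>k. g k - (if k \<in> {..<N} then g k else 0))"
      by (auto simp: g_def)
    ultimately show ?thesis
      unfolding l1norm_def by (simp add: sums_iff)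
  qed
  moreover have "(\<lambda>N. suminf g - (\<Sum>k<N. g k)) \<longlonglongrightarrow> suminf g - suminf g"
    by (intro tendsto_intros summable_LIMSEQ g)
  ultimately show ?thesis
    by simp
qed

lemma dual_norm_bounds:
  assumes "\<And>a. a \<in> l1 \<Longrightarrow> norm (f a) \<le> w * l1norm a" and "0 \<le> w"
  shows "0 \<le> dual_norm f" and "dual_norm f \<le> w"
proof -
  let ?S = "{norm (f a) | a. a \<in> l1 \<and> l1norm a \<le> 1}"
  have ub: "x \<le> w" if x: "x \<in> ?S" for x
  proof -
    obtain a where a: "x = norm (f a)" "a \<in> l1" "l1norm a \<le> 1"
      using x by blast
    have "norm (f a) \<le> w * l1norm a"
      using assms(1) a(2) .
    also have "\<dots> \<le> w"
      using a(3) assms(2) by (simp add: mult_left_le)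
    finally show ?thesis
      using a(1) by simp
  qed
  have zero: "norm (f (\<lambda>n. 0)) \<in> ?S"
    using zero_in_l1 l1norm_zero by force
  have "0 \<le> norm (f (\<lambda>n. 0))"
    by simp
  also have "\<dots> \<le> Sup ?S"
    using zero ub by (intro cSup_upper) (auto simp: bdd_above_def)
  finally show "0 \<le> dual_norm f"
    unfolding dual_norm_def .
  show "dual_norm f \<le> w"
    unfolding dual_norm_def using zero ub by (intro cSup_least) blast+
qed

lemma nuclear_l1_if_coordinates_bounded:
  fixes T :: "(nat \<Rightarrow> complex) \<Rightarrow> (nat \<Rightarrow> complex)" and w :: "nat \<Rightarrow> real"
  assumes w: "summable w" "\<And>k. 0 \<le> w k"
    and add: "\<And>k a b. a \<in> l1 \<Longrightarrow> b \<in> l1 \<Longrightarrow> T (\<lambda>n. a n + b n) k = T a k + T b k"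
    and scale: "\<And>k a c. a \<in> l1 \<Longrightarrow> T (\<lambda>n. c * a n) k = c * T a k"
    and bound: "\<And>k a. a \<in> l1 \<Longrightarrow> norm (T a k) \<le> w k * l1norm a"
  shows "nuclear_l1 T"
proof -
  define xs where "xs k = (\<lambda>a. T a k)" for k
  define ys where "ys k = (\<lambda>j. if j = k then 1 else 0 :: complex)" for k :: nat
  have T_l1: "T a \<in> l1" if "a \<in> l1" for a
    unfolding l1_def mem_Collect_eq
    by (rule summable_comparison_test[where g = "\<lambda>k. w k * l1norm a"])
       (use bound that w in \<open>auto intro: summable_mult2\<close>)
  have functional: "l1_functional (xs k)" for k
    unfolding l1_functional_def xs_def using add scale bound by blast
  have ys: "ys k \<in> l1" "l1norm (ys k) = 1" for k
    unfolding ys_def by (rule unit_vector_in_l1, rule l1norm_unit_vector)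
  have dual_norm: "0 \<le> dual_norm (xs k)" "dual_norm (xs k) \<le> w k" for k
    using dual_norm_bounds[of "xs k" "w k"] bound w(2) by (auto simp: xs_def)
  have summable: "summable (\<lambda>k. dual_norm (xs k) * l1norm (ys k))"
    by (rule summable_comparison_test[OF _ w(1)]) (simp add: ys dual_norm)
  have partial_sums: "(\<lambda>N. l1norm (\<lambda>k. T a k - (\<Sum>n<N. xs n a * ys n k))) \<longlonglongrightarrow> 0"
    if "a \<in> l1" for a
  proof -
    have "(\<Sum>n<N. xs n a * ys n k) = (if k < N then T a k else 0)" for N k
      unfolding xs_def ys_def
      by (simp add: if_distrib[of "\<lambda>x. T a _ * x"] sum.delta cong: if_cong)
    then have "(\<lambda>k. T a k - (\<Sum>n<N. xs n a * ys n k)) = (\<lambda>k. if k < N then 0 else T a k)" for N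
      by auto
    then show ?thesis
      using l1norm_truncation_tendsto_zero[OF T_l1[OF that]] by simp
  qed
  show ?thesis
    unfolding nuclear_l1_def
    using T_l1 functional ys(1) summable partial_sums
    by (intro conjI exI[of _ xs] exI[of _ ys]) auto
qed

lemma nuclear_l1_maps_l1: "nuclear_l1 T \<Longrightarrow> a \<in> l1 \<Longrightarrow> T a \<in> l1"
  by (simp add: nuclear_l1_def)

lemma
  fixes M :: "real measure"
  assumes "finite_measure M" and "space M \<subseteq> {0..1}" and "(\<lambda>t. t) \<in> borel_measurable M"
  shows mom_nonneg: "0 \<le> mom M n"
    and mom_antimono: "antimono (mom M)"
proof -
  interpret finite_measure M
    by (rule assms(1))
  have integrable: "integrable M (\<lambda>t. t ^ m)" for m
    using assms(2,3)
    by (intro integrable_const_bound[where B = 1]) (auto simp: power_le_one intro!: AE_I2)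
  show "0 \<le> mom M n"
    unfolding mom_def using assms(2) by (intro Bochner_Integration.integral_nonneg) auto
  show "antimono (mom M)"
  proof
    fix m n :: nat
    assume "m \<le> n"
    then show "mom M n \<le> mom M m"
      unfolding mom_def using assms(2)
      by (intro integral_mono[OF integrable integrable]) (auto intro!: power_decreasing)
  qed
qed

lemma norm_Cmu_le: "a \<in> l1 \<Longrightarrow> norm (Cmu M a k) \<le> \<bar>mom M k\<bar> * l1norm a"
proof -
  assume "a \<in> l1"
  then have "summable (\<lambda>n. norm (a n))"
    by (simp add: l1_def)
  then have "(\<Sum>n\<le>k. norm (a n)) \<le> l1norm a"
    unfolding l1norm_def by (rule sum_le_suminf) auto
  then have "norm (\<Sum>n\<le>k. a n) \<le> l1norm a"
    using norm_sum order_trans by blast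
  then show ?thesis
    unfolding Cmu_def by (simp add: norm_mult mult_left_mono)
qed

lemma nuclear_Cmu:
  assumes "summable (\<lambda>k. \<bar>mom M k\<bar>)"
  shows "nuclear_l1 (Cmu M)"
  using assms
proof (rule nuclear_l1_if_coordinates_bounded)
  show "Cmu M (\<lambda>n. a n + b n) k = Cmu M a k + Cmu M b k" for k a b
    unfolding Cmu_def by (simp add: sum.distrib distrib_left)
  show "Cmu M (\<lambda>n. c * a n) k = c * Cmu M a k" for k a c
    unfolding Cmu_def by (simp add: sum_distrib_left mult.left_commute)
qed (use norm_Cmu_le in auto)

lemma summable_abs_mom_if_C_well_defined:
  assumes "C_well_defined M"
  shows "summable (\<lambda>k. \<bar>mom M k\<bar>)"
proof -
  have "Cmu M (\<lambda>n. if n = 0 then 1 else 0) \<in> l1"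
    using assms unit_vector_in_l1 by (simp add: C_well_defined_def)
  moreover have "Cmu M (\<lambda>n. if n = 0 then 1 else 0) = (\<lambda>k. complex_of_real (mom M k))"
    by (simp add: Cmu_def)
  ultimately show ?thesis
    by (simp add: l1_def)
qed

context
  fixes M :: "real measure"
  assumes moments_nonneg: "\<And>n. 0 \<le> mom M n" and moments_antimono: "antimono (mom M)"
begin

lemma Hmu_series_bound:
  "norm (complex_of_real (mom M (n + k)) * a n) \<le> mom M k * norm (a n)"
  using moments_nonneg antimonoD[OF moments_antimono, of k "n + k"]
  by (simp add: norm_mult mult_right_mono)

lemma summable_norm_Hmu_series:
  "a \<in> l1 \<Longrightarrow> summable (\<lambda>n. norm (complex_of_real (mom M (n + k)) * a n))"
  unfolding l1_def mem_Collect_eq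
  by (rule summable_comparison_test[where g = "\<lambda>n. mom M k * norm (a n)"])
     (auto simp: Hmu_series_bound intro: summable_mult)

lemma summable_Hmu_series:
  "a \<in> l1 \<Longrightarrow> summable (\<lambda>n. complex_of_real (mom M (n + k)) * a n)"
  by (rule summable_norm_cancel[OF summable_norm_Hmu_series])

lemma norm_Hmu_le:
  assumes "a \<in> l1"
  shows "norm (Hmu M a k) \<le> mom M k * l1norm a"
proof -
  have a: "summable (\<lambda>n. norm (a n))"
    using assms by (simp add: l1_def)
  have "norm (Hmu M a k) \<le> (\<Sum>n. norm (complex_of_real (mom M (n + k)) * a n))"
    unfolding Hmu_def by (rule summable_norm[OF summable_norm_Hmu_series[OF assms]])
  also have "\<dots> \<le> (\<Sum>n. mom M k * norm (a n))"
    using summable_norm_Hmu_series[OF assms] a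
    by (intro suminf_le Hmu_series_bound summable_mult) auto
  also have "\<dots> = mom M k * l1norm a"
    unfolding l1norm_def by (rule suminf_mult[OF a])
  finally show ?thesis .
qed

lemma nuclear_Hmu:
  assumes "summable (mom M)"
  shows "nuclear_l1 (Hmu M)"
  using assms moments_nonneg
proof (rule nuclear_l1_if_coordinates_bounded)
  show "Hmu M (\<lambda>n. a n + b n) k = Hmu M a k + Hmu M b k" if "a \<in> l1" "b \<in> l1" for k a b
    unfolding Hmu_def using suminf_add[OF summable_Hmu_series[OF that(1)] summable_Hmu_series[OF that(2)]]
    by (simp add: distrib_left)
  show "Hmu M (\<lambda>n. c * a n) k = c * Hmu M a k" if "a \<in> l1" for k a c
    unfolding Hmu_def using suminf_mult[OF summable_Hmu_series[OF that], of c]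
    by (simp add: mult.left_commute)
qed (rule norm_Hmu_le)

lemma H_well_defined_if_summable_mom:
  "summable (mom M) \<Longrightarrow> H_well_defined M"
  using nuclear_Hmu summable_Hmu_series
  unfolding H_well_defined_def by (blast intro: nuclear_l1_maps_l1)

end

theorem theorem31:
  fixes M :: "real measure"
  assumes "sets M = sets (restrict_space borel {0..<1::real})"
    and "finite_measure M"
  shows "((H_well_defined M \<and> C_well_defined M) \<longleftrightarrow>
            (H_well_defined M \<and> nuclear_l1 (Hmu M) \<and> C_well_defined M \<and> nuclear_l1 (Cmu M)))
       \<and> ((H_well_defined M \<and> nuclear_l1 (Hmu M) \<and> C_well_defined M \<and> nuclear_l1 (Cmu M)) \<longleftrightarrow>
            summable (mom M))"
proof -
  have space: "space M \<subseteq> {0..1}"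
    using sets_eq_imp_space_eq[OF assms(1)] by auto
  have measurable: "(\<lambda>t. t) \<in> borel_measurable M"
    unfolding measurable_cong_sets[OF assms(1) refl]
    by (intro measurable_restrict_space1) simp
  have nonneg: "0 \<le> mom M n" for n
    using mom_nonneg[OF assms(2) space measurable] .
  have antimono: "antimono (mom M)"
    using mom_antimono[OF assms(2) space measurable] .
  have abs_mom: "(\<lambda>k. \<bar>mom M k\<bar>) = mom M"
    using nonneg by simp
  have "H_well_defined M \<and> nuclear_l1 (Hmu M) \<and> C_well_defined M \<and> nuclear_l1 (Cmu M)"
    if summable: "summable (mom M)"
  proof -
    have "nuclear_l1 (Cmu M)"
      using nuclear_Cmu summable abs_mom by metis
    then show ?thesis
      using H_well_defined_if_summable_mom[OF nonneg antimono summable]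
        nuclear_Hmu[OF nonneg antimono summable]
      by (auto simp: C_well_defined_def intro: nuclear_l1_maps_l1)
  qed
  moreover have "C_well_defined M \<Longrightarrow> summable (mom M)"
    using summable_abs_mom_if_C_well_defined abs_mom by metis
  ultimately show ?thesis
    by blast
qed

end
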